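(* Let $F\in\mathfrak{E}$ have degree $j$ with homogeneous decomposition $F=f_j+f_{j-1}+\cdots+f_{j-a}+\cdots$, where $f_i\in\mathfrak{D}$ for $j\ge i>j-a$ and $f_{j-a}\in\mathfrak{E}$. Let $A=S/\operatorname{Ann}_S F$, and suppose that $H_A(a)_1=H_A(a)_{j-a-1}\neq 0$ and that $H_A(a)_u=0$ for some $u\in[2,j-a-2]$. Then $f_{j-a}$ is linear in $Z_1,\ldots,Z_s$ (every monomial of $f_{j-a}$ has degree at most one in $Z_1,\ldots,Z_s$).
   Context: Let $\mathsf{k}$ be a field, $R=\mathsf{k}\{x_1,\ldots,x_r\}$, $S=\mathsf{k}\{x_1,\ldots,x_r,z_1,\ldots,z_s\}$, $\mathfrak{D}=\mathsf{k}_{DP}[X_1,\ldots,X_r]\subset\mathfrak{E}=\mathsf{k}_{DP}[X_1,\ldots,X_r,Z_1,\ldots,Z_s]$ divided power algebras with $S$ acting on $\mathfrak{E}$ by contraction ($x^{\alpha}\circ X^{[\beta]}=X^{[\beta-\alpha]}$ if $\beta\ge\alpha$ componentwise, $0$ otherwise). For $F\in\mathfrak{E}$ of degree $j$, $A=S/\operatorname{Ann}_S F$ is Artinian Gorenstein of socle degree $j$ with maximal ideal $\mathfrak{m}_A$; $C_A(a)$ is the ideal of $A^*=\bigoplus_i\mathfrak{m}_A^i/\mathfrak{m}_A^{i+1}$ whose degree-$i$ part is the image of $\mathfrak{m}_A^i\cap(0:\mathfrak{m}_A^{\,j+1-a-i})$, $Q_A(a)=C_A(a)/C_A(a+1)$,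 and $H_A(a)_i=\dim_{\mathsf{k}}Q_A(a)_i$. *)

theory Defs
  imports "HOL-Library.Poly_Mapping"
begin

text \<open>Variables are indexed by natural numbers: x_1..x_r are indices 0..r-1,
 z_1..z_s are indices r..r+s-1.  Exponent vectors are finitely supported maps
 nat to nat.  An element of the divided power algebra is a finitely supported
 coefficient map: lookup F b is the coefficient of X^[b].  A power series in
 the first n variables is a coefficient function vanishing on monomials that
 involve other variables.\<close>

definition mdeg :: "(nat \<Rightarrow>\<^sub>0 nat) \<Rightarrow> nat" where
  "mdeg b = (\<Sum>i\<in>Poly_Mapping.keys b. Poly_Mapping.lookup b i)"

definition dp_deg :: "((nat \<Rightarrow>\<^sub>0 nat) \<Rightarrow>\<^sub>0 'k::zero) \<Rightarrow> nat" where
  "dp_deg F = Max (mdeg ` Poly_Mapping.keys F)"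

definition PS :: "nat \<Rightarrow> ((nat \<Rightarrow>\<^sub>0 nat) \<Rightarrow> 'k::field) set" where
  "PS n = {g. \<forall>b. \<not> Poly_Mapping.keys b \<subseteq> {..<n} \<longrightarrow> g b = 0}"

definition ps_add :: "((nat \<Rightarrow>\<^sub>0 nat) \<Rightarrow> 'k::field) \<Rightarrow> ((nat \<Rightarrow>\<^sub>0 nat) \<Rightarrow> 'k) \<Rightarrow> ((nat \<Rightarrow>\<^sub>0 nat) \<Rightarrow> 'k)" where
  "ps_add g h = (\<lambda>c. g c + h c)"

definition ps_mult :: "((nat \<Rightarrow>\<^sub>0 nat) \<Rightarrow> 'k::field) \<Rightarrow> ((nat \<Rightarrow>\<^sub>0 nat) \<Rightarrow> 'k) \<Rightarrow> ((nat \<Rightarrow>\<^sub>0 nat) \<Rightarrow> 'k)" where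
  "ps_mult g h = (\<lambda>c. \<Sum>(a, b)\<in>{(a, b). a + b = c}. g a * h b)"

text \<open>contraction action: x^a o X^[b] = X^[b-a] if a <= b, else 0;
  the result is returned as its coefficient function\<close>
definition contract :: "((nat \<Rightarrow>\<^sub>0 nat) \<Rightarrow> 'k::field) \<Rightarrow> ((nat \<Rightarrow>\<^sub>0 nat) \<Rightarrow>\<^sub>0 'k) \<Rightarrow> ((nat \<Rightarrow>\<^sub>0 nat) \<Rightarrow> 'k)" where
  "contract g F = (\<lambda>c. \<Sum>a\<in>{a. Poly_Mapping.lookup F (a + c) \<noteq> 0}. g a * Poly_Mapping.lookup F (a + c))"

definition Ann :: "nat \<Rightarrow> ((nat \<Rightarrow>\<^sub>0 nat) \<Rightarrow>\<^sub>0 'k::field) \<Rightarrow> ((nat \<Rightarrow>\<^sub>0 nat) \<Rightarrow> 'k) set" where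
  "Ann n F = {g \<in> PS n. contract g F = (\<lambda>_. 0)}"

text \<open>m^i in the power series ring = series of order at least i\<close>
definition mpow :: "nat \<Rightarrow> nat \<Rightarrow> ((nat \<Rightarrow>\<^sub>0 nat) \<Rightarrow> 'k::field) set" where
  "mpow n i = {g \<in> PS n. \<forall>b. mdeg b < i \<longrightarrow> g b = 0}"

definition set_add :: "((nat \<Rightarrow>\<^sub>0 nat) \<Rightarrow> 'k::field) set \<Rightarrow> ((nat \<Rightarrow>\<^sub>0 nat) \<Rightarrow> 'k) set \<Rightarrow> ((nat \<Rightarrow>\<^sub>0 nat) \<Rightarrow> 'k) set" where
  "set_add U V = {ps_add u v | u v. u \<in> U \<and> v \<in> V}"

text \<open>preimage in S of m_A^i, where A = S / Ann F\<close>
definition pre_mA :: "nat \<Rightarrow> ((nat \<Rightarrow>\<^sub>0 nat) \<Rightarrow>\<^sub>0 'k::field) \<Rightarrow> nat \<Rightarrow> ((nat \<Rightarrow>\<^sub>0 nat) \<Rightarrow> 'k) set" where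
  "pre_mA n F i = set_add (mpow n i) (Ann n F)"

text \<open>preimage in S of (0 : m_A^k)\<close>
definition pre_colon :: "nat \<Rightarrow> ((nat \<Rightarrow>\<^sub>0 nat) \<Rightarrow>\<^sub>0 'k::field) \<Rightarrow> nat \<Rightarrow> ((nat \<Rightarrow>\<^sub>0 nat) \<Rightarrow> 'k) set" where
  "pre_colon n F k = {g \<in> PS n. \<forall>h\<in>pre_mA n F k. ps_mult g h \<in> Ann n F}"

text \<open>dimension of the quotient space U/W (W a subspace of U): the maximal size
 of a finite subset of U that is linearly independent modulo W\<close>
definition qdim :: "('v \<Rightarrow> 'k::field) set \<Rightarrow> ('v \<Rightarrow> 'k) set \<Rightarrow> nat" where
  "qdim U W = Sup {card B | B. finite B \<and> B \<subseteq> U \<and>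
      (\<forall>c. (\<lambda>x. \<Sum>b\<in>B. c b * b x) \<in> W \<longrightarrow> (\<forall>b\<in>B. c b = 0))}"

text \<open>preimage in S of m_A^i \<inter> (0 : m_A^(j+1-a-i)), j the socle degree\<close>
definition preC :: "nat \<Rightarrow> ((nat \<Rightarrow>\<^sub>0 nat) \<Rightarrow>\<^sub>0 'k::field) \<Rightarrow> nat \<Rightarrow> nat \<Rightarrow> ((nat \<Rightarrow>\<^sub>0 nat) \<Rightarrow> 'k) set" where
  "preC n F a i = pre_mA n F i \<inter> pre_colon n F (dp_deg F + 1 - a - i)"

text \<open>H_A(a)_i = dim Q_A(a)_i = dim C_A(a)_i / C_A(a+1)_i; via
  m_A^i/m_A^(i+1) = (m^i + Ann)/(m^(i+1) + Ann), C_A(a)_i corresponds to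
  preC a i + pre_mA (i+1), so Q_A(a)_i = (preC a i + N)/(preC (a+1) i + N).\<close>
definition HA :: "nat \<Rightarrow> ((nat \<Rightarrow>\<^sub>0 nat) \<Rightarrow>\<^sub>0 'k::field) \<Rightarrow> nat \<Rightarrow> nat \<Rightarrow> nat" where
  "HA n F a i = qdim (set_add (preC n F a i) (pre_mA n F (Suc i)))
                     (set_add (preC n F (Suc a) i) (pre_mA n F (Suc i)))"

end

theory Submission
  imports Defs "HOL-Library.Function_Algebras" "HOL.Vector_Spaces"
begin

text \<open>If some monomial \<open>X^[b]\<close> of \<open>f_(j-a)\<close> had degree at least two in the \<open>Z\<close>,
  split \<open>b = \<beta> + \<gamma>\<close> with \<open>|\<beta>| = u\<close> so that both \<open>\<beta>\<close> and \<open>\<gamma>\<close> involve some \<open>Z\<close>.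
  All monomials of \<open>F\<close> of degree \<open>> j - a\<close> are free of \<open>Z\<close>, so contracting \<open>F\<close> by a
  series of order \<open>k\<close> leaves no \<open>X^[x]\<close>-term whenever \<open>x\<close> involves a \<open>Z\<close> and
  \<open>k + |x| > j - a\<close>. Hence \<open>x^\<beta>\<close> kills \<open>m^(j+1-a-u)\<close> modulo \<open>Ann F\<close>, i.e. it lies in
  \<open>C_A(a)_u\<close>; whereas the functional "coefficient of \<open>X^[\<gamma>]\<close> in \<open>g \<circ> F\<close>" vanishes on
  \<open>C_A(a+1)_u + m^(u+1)\<close> and takes the value \<open>F_b \<noteq> 0\<close> at \<open>x^\<beta>\<close>. So \<open>H_A(a)_u \<noteq> 0\<close>.\<close>

section \<open>Linear independence modulo a subspace\<close>

lemma sum_fun_apply: "(\<Sum>v\<in>S. f v) x = (\<Sum>v\<in>S. f v x)"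
  for f :: "'a \<Rightarrow> 'v \<Rightarrow> 'k::comm_monoid_add"
  by (induction S rule: infinite_finite_induct) auto

lemma card_le_card_if_independent_on:
  fixes B :: "('v \<Rightarrow> 'k::field) set"
  assumes M: "finite M" and B: "finite B"
    and indep: "\<And>c. \<forall>x\<in>M. (\<Sum>b\<in>B. c b * b x) = 0 \<Longrightarrow> \<forall>b\<in>B. c b = 0"
  shows "card B \<le> card M"
proof -
  interpret VS: vector_space "\<lambda>(c::'k) (f::'v \<Rightarrow> 'k) x. c * f x"
    by unfold_locales (auto simp: fun_eq_iff algebra_simps)
  define T where "T f x = (if x \<in> M then f x else 0)" for f :: "'v \<Rightarrow> 'k" and x
  define \<delta> where "\<delta> m x = (if x = m then 1 else (0::'k))" for m x :: 'v
  have inj: "inj_on T B"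
  proof (rule inj_onI, rule ccontr)
    fix b1 b2 assume b1: "b1 \<in> B" and b2: "b2 \<in> B" and T: "T b1 = T b2" and ne: "b1 \<noteq> b2"
    define c where "c b = (if b = b1 then 1 else if b = b2 then -1 else (0::'k))" for b
    have "(\<Sum>b\<in>B. c b * b x) = b1 x - b2 x" for x
    proof -
      have "(\<Sum>b\<in>B. c b * b x) =
          (\<Sum>b\<in>B. (if b = b1 then b1 x else 0) + (if b = b2 then - b2 x else 0))"
        by (intro sum.cong) (auto simp: c_def ne)
      then show ?thesis using B b1 b2 by (simp add: sum.distrib)
    qed
    moreover have "b1 x = b2 x" if "x \<in> M" for x
      using fun_cong[OF T, of x] that by (simp add: T_def)
    ultimately have "\<forall>b\<in>B. c b = 0" by (intro indep) simp
    with b1 have "c b1 = 0" by blast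
    then show False by (simp add: c_def)
  qed
  have "VS.independent (T ` B)"
  proof (rule VS.independent_if_scalars_zero)
    show "finite (T ` B)" using B by simp
    fix f t
    assume sum: "(\<Sum>t\<in>T ` B. (\<lambda>x. f t * t x)) = 0" and t: "t \<in> T ` B"
    have "\<forall>x\<in>M. (\<Sum>b\<in>B. f (T b) * b x) = 0"
    proof
      fix x assume x: "x \<in> M"
      have "(\<Sum>b\<in>B. f (T b) * b x) = (\<Sum>b\<in>B. f (T b) * T b x)"
        using x by (simp add: T_def)
      also have "\<dots> = (\<Sum>t\<in>T ` B. (\<lambda>x. f t * t x)) x"
        by (simp add: sum.reindex[OF inj] sum_fun_apply)
      finally show "(\<Sum>b\<in>B. f (T b) * b x) = 0" using sum by simp
    qed
    then have "\<forall>b\<in>B. f (T b) = 0" by (rule indep)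
    with t show "f t = 0" by blast
  qed
  moreover have "T ` B \<subseteq> VS.span (\<delta> ` M)"
  proof
    fix t assume "t \<in> T ` B"
    then obtain b where t: "t = T b" by blast
    have "T b = (\<Sum>m\<in>M. (\<lambda>x. b m * \<delta> m x))"
      by (rule ext) (simp add: sum_fun_apply T_def \<delta>_def M if_distrib cong: if_cong)
    also have "\<dots> \<in> VS.span (\<delta> ` M)"
      by (intro VS.span_sum VS.span_scale VS.span_base) auto
    finally show "t \<in> VS.span (\<delta> ` M)" using t by simp
  qed
  ultimately have "card (T ` B) \<le> card (\<delta> ` M)"
    using VS.independent_span_bound M by blast
  also have "\<dots> \<le> card M"
    using M by (rule card_image_le)
  finally show ?thesis
    using card_image[OF inj] by simp
qed

lemma qdim_ne_0:
  fixes U W :: "('v \<Rightarrow> 'k::field) set"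
  assumes M: "finite M"
    and W: "\<And>B c. finite B \<Longrightarrow> B \<subseteq> U \<Longrightarrow> \<forall>x\<in>M. (\<Sum>b\<in>B. c b * b x) = 0
              \<Longrightarrow> (\<lambda>x. \<Sum>b\<in>B. c b * b x) \<in> W"
    and g: "g \<in> U" and g_indep: "\<And>c. (\<lambda>x. c * g x) \<in> W \<Longrightarrow> c = 0"
  shows "qdim U W \<noteq> 0"
proof -
  define SS where "SS = {card B | B. finite B \<and> B \<subseteq> U \<and>
      (\<forall>c. (\<lambda>x. \<Sum>b\<in>B. c b * b x) \<in> W \<longrightarrow> (\<forall>b\<in>B. c b = 0))}"
  \<comment> \<open>needed because an unbounded set of naturals has the junk supremum 0\<close>
  have "bdd_above SS"
  proof (rule bdd_aboveI)
    fix k assume "k \<in> SS"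
    then obtain B where k: "k = card B" and B: "finite B" "B \<subseteq> U"
      and indep: "\<forall>c. (\<lambda>x. \<Sum>b\<in>B. c b * b x) \<in> W \<longrightarrow> (\<forall>b\<in>B. c b = 0)"
      unfolding SS_def by blast
    show "k \<le> card M"
      unfolding k using M B(1) by (rule card_le_card_if_independent_on) (use W B indep in blast)
  qed
  moreover have "1 \<in> SS"
    unfolding SS_def using g g_indep by (intro CollectI exI[of _ "{g}"]) auto
  ultimately have "1 \<le> Sup SS"
    by (intro cSup_upper)
  then show ?thesis
    unfolding qdim_def SS_def by simp
qed

section \<open>Exponent vectors\<close>

lemma mdeg_eq_sum:
  assumes "finite K" "Poly_Mapping.keys b \<subseteq> K"
  shows "mdeg b = (\<Sum>i\<in>K. Poly_Mapping.lookup b i)"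
  unfolding mdeg_def using assms
  by (intro sum.mono_neutral_left) (auto simp: in_keys_iff)

lemma mdeg_add: "mdeg (x + y) = mdeg x + mdeg y"
proof -
  let ?K = "Poly_Mapping.keys x \<union> Poly_Mapping.keys y"
  have "mdeg (x + y) = (\<Sum>i\<in>?K. Poly_Mapping.lookup (x + y) i)"
    using keys_add[of x y] by (intro mdeg_eq_sum) auto
  also have "\<dots> = (\<Sum>i\<in>?K. Poly_Mapping.lookup x i) + (\<Sum>i\<in>?K. Poly_Mapping.lookup y i)"
    by (simp add: lookup_add sum.distrib)
  also have "\<dots> = mdeg x + mdeg y"
    by (subst (1 2) mdeg_eq_sum[of ?K]) auto
  finally show ?thesis .
qed

lemma mdeg_single: "mdeg (Poly_Mapping.single i k) = k"
  unfolding mdeg_def by simp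

lemma lookup_le_mdeg: "Poly_Mapping.lookup b i \<le> mdeg b"
  unfolding mdeg_def
  by (cases "i \<in> Poly_Mapping.keys b") (auto intro: member_le_sum simp: in_keys_iff)

lemma mdeg_pos_if_not_keys_subset:
  assumes "\<not> Poly_Mapping.keys \<beta> \<subseteq> A"
  shows "0 < mdeg \<beta>"
proof -
  obtain i where "i \<in> Poly_Mapping.keys \<beta>" using assms by blast
  then have "0 < Poly_Mapping.lookup \<beta> i" by (simp add: in_keys_iff)
  then show ?thesis using lookup_le_mdeg by (rule less_le_trans)
qed

lemma keys_add_nat:
  "Poly_Mapping.keys (x + y) = Poly_Mapping.keys x \<union> Poly_Mapping.keys (y :: 'a \<Rightarrow>\<^sub>0 nat)"
  by (auto simp: in_keys_iff lookup_add)

lemma single_add_minus_single: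
  assumes "0 < Poly_Mapping.lookup x i"
  shows "Poly_Mapping.single i 1 + (x - Poly_Mapping.single i 1) = (x :: 'a \<Rightarrow>\<^sub>0 nat)"
  using assms by (intro poly_mapping_eqI) (auto simp: lookup_add lookup_minus lookup_single when_def)

lemma exists_add_mdeg_eq:
  assumes "m \<le> mdeg c"
  shows "\<exists>\<beta> d. c = \<beta> + d \<and> mdeg \<beta> = m"
  using assms
proof (induction m)
  case 0
  show ?case by (intro exI[of _ 0] exI[of _ c]) (simp add: mdeg_def)
next
  case (Suc m)
  then obtain \<beta> d where c: "c = \<beta> + d" and \<beta>: "mdeg \<beta> = m" by auto
  then have "mdeg d \<noteq> 0" using Suc.prems by (simp add: mdeg_add)
  then obtain i where "i \<in> Poly_Mapping.keys d"
    unfolding mdeg_def by (metis sum.empty all_not_in_conv)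
  then have d: "d = Poly_Mapping.single i 1 + (d - Poly_Mapping.single i 1)"
    using single_add_minus_single[of d i] by (simp add: in_keys_iff)
  have "c = (\<beta> + Poly_Mapping.single i 1) + (d - Poly_Mapping.single i 1)"
    using c d by (metis add.assoc)
  moreover have "mdeg (\<beta> + Poly_Mapping.single i 1) = Suc m"
    using \<beta> by (simp add: mdeg_add mdeg_single)
  ultimately show ?case by blast
qed

lemma split_off_variable_in:
  fixes b :: "'a \<Rightarrow>\<^sub>0 nat"
  assumes pos: "0 < (\<Sum>i\<in>I. Poly_Mapping.lookup b i)"
  obtains k c where "k \<in> I" "b = Poly_Mapping.single k 1 + c"
    "(\<Sum>i\<in>I. Poly_Mapping.lookup c i) = (\<Sum>i\<in>I. Poly_Mapping.lookup b i) - 1"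
proof -
  have I: "finite I"
    using pos by (cases "finite I") auto
  obtain k where k: "k \<in> I" "0 < Poly_Mapping.lookup b k"
  proof (rule ccontr)
    assume "\<not> thesis"
    with that have "\<forall>i\<in>I. Poly_Mapping.lookup b i = 0" by blast
    with pos show False by simp
  qed
  define c where "c = b - Poly_Mapping.single k 1"
  have b: "b = Poly_Mapping.single k 1 + c"
    unfolding c_def using single_add_minus_single[OF k(2)] by simp
  have "(\<Sum>i\<in>I. Poly_Mapping.lookup b i) = 1 + (\<Sum>i\<in>I. Poly_Mapping.lookup c i)"
    using I k(1) by (subst b) (simp add: lookup_add lookup_single when_def sum.distrib)
  with k(1) b show ?thesis by (intro that) auto
qed

lemma exists_split_both_meeting:
  assumes two: "2 \<le> (\<Sum>i\<in>I. Poly_Mapping.lookup b i)"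
    and u: "1 \<le> u" "u < mdeg b"
  shows "\<exists>\<beta> \<gamma>. b = \<beta> + \<gamma> \<and> mdeg \<beta> = u \<and>
    Poly_Mapping.keys \<beta> \<inter> I \<noteq> {} \<and> Poly_Mapping.keys \<gamma> \<inter> I \<noteq> {}"
proof -
  have "0 < (\<Sum>i\<in>I. Poly_Mapping.lookup b i)"
    using two by simp
  then obtain k b1 where k: "k \<in> I" and b: "b = Poly_Mapping.single k 1 + b1"
    and b1: "(\<Sum>i\<in>I. Poly_Mapping.lookup b1 i) = (\<Sum>i\<in>I. Poly_Mapping.lookup b i) - 1"
    by (rule split_off_variable_in)
  from two b1 have "0 < (\<Sum>i\<in>I. Poly_Mapping.lookup b1 i)"
    by simp
  then obtain l c where l: "l \<in> I" and b1c: "b1 = Poly_Mapping.single l 1 + c"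
    by (rule split_off_variable_in)
  have "mdeg b = Suc (Suc (mdeg c))"
    unfolding b b1c by (simp add: mdeg_add mdeg_single)
  with u have "u - 1 \<le> mdeg c"
    by linarith
  then obtain \<beta>' d where c: "c = \<beta>' + d" and \<beta>': "mdeg \<beta>' = u - 1"
    using exists_add_mdeg_eq by blast
  define \<beta> where "\<beta> = Poly_Mapping.single k 1 + \<beta>'"
  define \<gamma> where "\<gamma> = Poly_Mapping.single l 1 + d"
  have "b = \<beta> + \<gamma>"
    unfolding \<beta>_def \<gamma>_def b b1c c by (simp add: ac_simps)
  moreover have "mdeg \<beta> = u"
    using \<beta>' u by (simp add: \<beta>_def mdeg_add mdeg_single)
  moreover have "k \<in> Poly_Mapping.keys \<beta>" "l \<in> Poly_Mapping.keys \<gamma>"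
    unfolding \<beta>_def \<gamma>_def by (simp_all add: in_keys_iff lookup_add)
  ultimately show ?thesis
    using k l by blast
qed

lemma finite_mdeg_le:
  assumes "finite K"
  shows "finite {x. Poly_Mapping.keys x \<subseteq> K \<and> mdeg x \<le> N}" (is "finite ?X")
proof (rule finite_imageD)
  have "Poly_Mapping.lookup ` ?X \<subseteq>
      {f. \<forall>i. (i \<in> K \<longrightarrow> f i \<in> {..N}) \<and> (i \<notin> K \<longrightarrow> f i = 0)}"
    using lookup_le_mdeg by (fastforce simp: in_keys_iff intro: le_trans)
  then show "finite (Poly_Mapping.lookup ` ?X)"
    by (rule finite_subset) (intro finite_set_of_finite_funs assms finite_atMost)
  show "inj_on Poly_Mapping.lookup ?X"
    by (auto intro: inj_onI poly_mapping_eqI)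
qed

lemma finite_add_decompositions: "finite {(a, b). a + b = (c :: nat \<Rightarrow>\<^sub>0 nat)}"
proof (rule finite_subset)
  let ?X = "{x. Poly_Mapping.keys x \<subseteq> Poly_Mapping.keys c \<and> mdeg x \<le> mdeg c}"
  show "{(a, b). a + b = c} \<subseteq> ?X \<times> ?X"
    by (auto simp: keys_add_nat mdeg_add)
  show "finite (?X \<times> ?X)"
    by (simp add: finite_mdeg_le)
qed

lemma finite_lookup_shift_ne_0:
  "finite {a. Poly_Mapping.lookup (F :: (nat \<Rightarrow>\<^sub>0 nat) \<Rightarrow>\<^sub>0 'k::zero) (a + c) \<noteq> 0}"
proof -
  have "{a. Poly_Mapping.lookup F (a + c) \<noteq> 0} = (\<lambda>a. a + c) -` Poly_Mapping.keys F"
    by (auto simp: in_keys_iff)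
  then show ?thesis
    by (simp add: finite_vimageI inj_def)
qed

section \<open>Power series and contraction\<close>

definition ps_monom :: "(nat \<Rightarrow>\<^sub>0 nat) \<Rightarrow> (nat \<Rightarrow>\<^sub>0 nat) \<Rightarrow> 'k::field" where
  "ps_monom \<beta> = (\<lambda>c. if c = \<beta> then 1 else 0)"

lemma ps_mult_comm: "ps_mult g h = ps_mult h g"
  unfolding ps_mult_def
  by (rule ext, rule sum.reindex_bij_witness[where i=prod.swap and j=prod.swap])
     (auto simp: add.commute)

lemma ps_mult_monom_add: "ps_mult (ps_monom \<beta>) h (\<beta> + e) = h e"
proof -
  have "ps_mult (ps_monom \<beta>) h (\<beta> + e) =
      (\<Sum>p\<in>{(a, b). a + b = \<beta> + e}. if p = (\<beta>, e) then h e else 0)"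
    unfolding ps_mult_def ps_monom_def by (intro sum.cong) (auto split: if_splits)
  then show ?thesis
    using finite_add_decompositions[of "\<beta> + e"] by simp
qed

lemma ps_mult_monom_eq_0:
  "(\<And>e. y \<noteq> \<beta> + e) \<Longrightarrow> ps_mult (ps_monom \<beta>) h y = 0"
  unfolding ps_mult_def ps_monom_def by (intro sum.neutral) auto

lemma ps_monom_PS: "Poly_Mapping.keys \<beta> \<subseteq> {..<n} \<Longrightarrow> ps_monom \<beta> \<in> PS n"
  unfolding PS_def ps_monom_def by auto

lemma ps_monom_mpow:
  "Poly_Mapping.keys \<beta> \<subseteq> {..<n} \<Longrightarrow> ps_monom \<beta> \<in> mpow n (mdeg \<beta>)"
  unfolding mpow_def using ps_monom_PS by (auto simp: ps_monom_def)

lemma ps_mult_monom_PS: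
  assumes \<beta>: "Poly_Mapping.keys \<beta> \<subseteq> {..<n}" and h: "h \<in> PS n"
  shows "ps_mult (ps_monom \<beta>) h \<in> PS n"
  unfolding PS_def
proof (intro CollectI allI impI)
  fix y :: "nat \<Rightarrow>\<^sub>0 nat"
  assume y: "\<not> Poly_Mapping.keys y \<subseteq> {..<n}"
  show "ps_mult (ps_monom \<beta>) h y = 0"
  proof (cases "\<exists>e. y = \<beta> + e")
    case True
    then obtain e where e: "y = \<beta> + e" by blast
    with y \<beta> have "\<not> Poly_Mapping.keys e \<subseteq> {..<n}" by (auto simp: keys_add_nat)
    with h e show ?thesis by (simp add: ps_mult_monom_add PS_def)
  qed (auto intro: ps_mult_monom_eq_0)
qed

lemma contract_ps_add: "contract (ps_add f g) F x = contract f F x + contract g F x"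
  unfolding contract_def ps_add_def by (simp add: sum.distrib algebra_simps)

lemma contract_scale: "contract (\<lambda>y. k * f y) F x = k * contract f F x"
  unfolding contract_def by (simp add: sum_distrib_left algebra_simps)

lemma contract_ps_monom: "contract (ps_monom \<beta>) F \<gamma> = Poly_Mapping.lookup F (\<beta> + \<gamma>)"
proof -
  have "contract (ps_monom \<beta>) F \<gamma> = (\<Sum>a\<in>{a. Poly_Mapping.lookup F (a + \<gamma>) \<noteq> 0}.
      if a = \<beta> then Poly_Mapping.lookup F (\<beta> + \<gamma>) else 0)"
    unfolding contract_def ps_monom_def by (intro sum.cong) auto
  then show ?thesis
    using finite_lookup_shift_ne_0[of F \<gamma>] by simp
qed

lemma contract_ps_mult_monom:
  "contract (ps_mult (ps_monom \<beta>) h) F c = contract h F (\<beta> + c)"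
proof -
  let ?A = "{a. Poly_Mapping.lookup F (a + c) \<noteq> 0}"
  let ?E = "{e. Poly_Mapping.lookup F (e + (\<beta> + c)) \<noteq> 0}"
  have "contract (ps_mult (ps_monom \<beta>) h) F c =
      (\<Sum>a\<in>?A. ps_mult (ps_monom \<beta>) h a * Poly_Mapping.lookup F (a + c))"
    unfolding contract_def ..
  also have "\<dots> = (\<Sum>a\<in>(+) \<beta> ` ?E. ps_mult (ps_monom \<beta>) h a * Poly_Mapping.lookup F (a + c))"
  proof (rule sum.mono_neutral_right)
    show "(+) \<beta> ` ?E \<subseteq> ?A" by (auto simp: ac_simps)
    show "\<forall>a\<in>?A - (+) \<beta> ` ?E. ps_mult (ps_monom \<beta>) h a * Poly_Mapping.lookup F (a + c) = 0"
    proof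
      fix a assume a: "a \<in> ?A - (+) \<beta> ` ?E"
      then have "a \<noteq> \<beta> + e" for e by (auto simp: ac_simps)
      then show "ps_mult (ps_monom \<beta>) h a * Poly_Mapping.lookup F (a + c) = 0"
        by (simp add: ps_mult_monom_eq_0)
    qed
  qed (rule finite_lookup_shift_ne_0)
  also have "\<dots> = (\<Sum>e\<in>?E. h e * Poly_Mapping.lookup F (e + (\<beta> + c)))"
    by (subst sum.reindex) (auto intro: inj_onI simp: ps_mult_monom_add add.assoc add.left_commute)
  also have "\<dots> = contract h F (\<beta> + c)"
    unfolding contract_def ..
  finally show ?thesis .
qed

lemma zero_PS: "(\<lambda>_. 0) \<in> PS n"
  unfolding PS_def by simp

lemma ps_add_PS: "f \<in> PS n \<Longrightarrow> g \<in> PS n \<Longrightarrow> ps_add f g \<in> PS n"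
  unfolding PS_def ps_add_def by simp

lemma zero_Ann: "(\<lambda>_. 0) \<in> Ann n F"
  unfolding Ann_def contract_def by (simp add: zero_PS)

lemma contract_Ann: "g \<in> Ann n F \<Longrightarrow> contract g F x = 0"
  unfolding Ann_def by (auto dest: fun_cong)

lemma set_add_PS: "U \<subseteq> PS n \<Longrightarrow> V \<subseteq> PS n \<Longrightarrow> set_add U V \<subseteq> PS n"
  unfolding set_add_def by (auto intro: ps_add_PS)

lemma set_add_zero_right: "(\<lambda>_. 0) \<in> V \<Longrightarrow> U \<subseteq> set_add U V"
  unfolding set_add_def ps_add_def by force

lemma set_add_zero_left: "(\<lambda>_. 0) \<in> U \<Longrightarrow> V \<subseteq> set_add U V"
  unfolding set_add_def ps_add_def by force

lemma mpow_subset_pre_mA: "mpow n k \<subseteq> pre_mA n F k"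
  unfolding pre_mA_def by (rule set_add_zero_right[OF zero_Ann])

lemma pre_mA_PS: "pre_mA n F k \<subseteq> PS n"
  unfolding pre_mA_def mpow_def Ann_def by (rule set_add_PS) auto

lemma zero_pre_mA: "(\<lambda>_. 0) \<in> pre_mA n F k"
  using mpow_subset_pre_mA unfolding mpow_def by (fastforce simp: zero_PS)

lemma zero_preC: "(\<lambda>_. 0) \<in> preC n F a i"
proof -
  have "ps_mult (\<lambda>_. 0) h = (\<lambda>_. 0)" for h :: "(nat \<Rightarrow>\<^sub>0 nat) \<Rightarrow> 'a"
    unfolding ps_mult_def by simp
  then show ?thesis
    unfolding preC_def pre_colon_def by (simp add: zero_pre_mA zero_PS zero_Ann)
qed

section \<open>Nonvanishing of the Hilbert function of a stratum\<close>

lemma contract_pre_mA_eq_0: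
  assumes low: "\<forall>b\<in>Poly_Mapping.keys F. J < mdeg b \<longrightarrow> Poly_Mapping.keys b \<subseteq> {..<r}"
    and x: "\<not> Poly_Mapping.keys x \<subseteq> {..<r}"
    and h: "h \<in> pre_mA n F k" and deg: "J < k + mdeg x"
  shows "contract h F x = 0"
proof -
  obtain h1 h2 where h12: "h = ps_add h1 h2" and h1: "h1 \<in> mpow n k" and h2: "h2 \<in> Ann n F"
    using h unfolding pre_mA_def set_add_def by blast
  have "contract h1 F x = 0"
    unfolding contract_def
  proof (intro sum.neutral ballI)
    fix e assume e: "e \<in> {e. Poly_Mapping.lookup F (e + x) \<noteq> 0}"
    show "h1 e * Poly_Mapping.lookup F (e + x) = 0"
    proof (cases "mdeg e < k")
      case True
      with h1 show ?thesis by (simp add: mpow_def)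
    next
      case False
      with deg have "J < mdeg (e + x)" by (simp add: mdeg_add)
      moreover have "e + x \<in> Poly_Mapping.keys F" using e by (simp add: in_keys_iff)
      moreover have "\<not> Poly_Mapping.keys (e + x) \<subseteq> {..<r}" using x by (simp add: keys_add_nat)
      ultimately show ?thesis using low by blast
    qed
  qed
  then show ?thesis
    by (simp add: h12 contract_ps_add contract_Ann[OF h2])
qed

lemma ps_monom_preC:
  assumes low: "\<forall>b\<in>Poly_Mapping.keys F. dp_deg F - a < mdeg b \<longrightarrow> Poly_Mapping.keys b \<subseteq> {..<r}"
    and \<beta>n: "Poly_Mapping.keys \<beta> \<subseteq> {..<n}" and \<beta>r: "\<not> Poly_Mapping.keys \<beta> \<subseteq> {..<r}"
  shows "ps_monom \<beta> \<in> preC n F a (mdeg \<beta>)"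
proof -
  have "ps_monom \<beta> \<in> pre_mA n F (mdeg \<beta>)"
    using ps_monom_mpow[OF \<beta>n] mpow_subset_pre_mA by blast
  moreover have "ps_monom \<beta> \<in> pre_colon n F (dp_deg F + 1 - a - mdeg \<beta>)"
    unfolding pre_colon_def
  proof (intro CollectI conjI ballI)
    show "ps_monom \<beta> \<in> PS n" using ps_monom_PS[OF \<beta>n] .
    fix h assume h: "h \<in> pre_mA n F (dp_deg F + 1 - a - mdeg \<beta>)"
    have "contract (ps_mult (ps_monom \<beta>) h) F x = 0" for x
    proof -
      have "\<not> Poly_Mapping.keys (\<beta> + x) \<subseteq> {..<r}"
        using \<beta>r by (simp add: keys_add_nat)
      moreover have "dp_deg F - a < (dp_deg F + 1 - a - mdeg \<beta>) + mdeg (\<beta> + x)"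
        using mdeg_pos_if_not_keys_subset[OF \<beta>r] by (simp add: mdeg_add)
      ultimately have "contract h F (\<beta> + x) = 0"
        by (rule contract_pre_mA_eq_0[OF low _ h])
      then show ?thesis by (simp add: contract_ps_mult_monom)
    qed
    moreover have "h \<in> PS n" using pre_mA_PS h by blast
    ultimately show "ps_mult (ps_monom \<beta>) h \<in> Ann n F"
      unfolding Ann_def using ps_mult_monom_PS[OF \<beta>n] by auto
  qed
  ultimately show ?thesis
    unfolding preC_def by blast
qed

lemma contract_eq_0_on_next_stratum:
  assumes low: "\<forall>b\<in>Poly_Mapping.keys F. dp_deg F - a < mdeg b \<longrightarrow> Poly_Mapping.keys b \<subseteq> {..<r}"
    and \<gamma>n: "Poly_Mapping.keys \<gamma> \<subseteq> {..<n}" and \<gamma>r: "\<not> Poly_Mapping.keys \<gamma> \<subseteq> {..<r}"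
    and \<gamma>deg: "mdeg \<gamma> = dp_deg F - a - u"
    and w: "w \<in> set_add (preC n F (Suc a) u) (pre_mA n F (Suc u))"
  shows "contract w F \<gamma> = 0"
proof -
  obtain p q where w: "w = ps_add p q"
    and p: "p \<in> preC n F (Suc a) u" and q: "q \<in> pre_mA n F (Suc u)"
    using w unfolding set_add_def by blast
  have "ps_monom \<gamma> \<in> pre_mA n F (dp_deg F - a - u)"
    using ps_monom_mpow[OF \<gamma>n] mpow_subset_pre_mA \<gamma>deg by force
  then have "ps_mult p (ps_monom \<gamma>) \<in> Ann n F"
    using p unfolding preC_def pre_colon_def by auto
  then have "contract (ps_mult (ps_monom \<gamma>) p) F 0 = 0"
    unfolding ps_mult_comm[of "ps_monom \<gamma>" p] by (rule contract_Ann)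
  then have "contract p F \<gamma> = 0"
    by (simp add: contract_ps_mult_monom)
  moreover have "contract q F \<gamma> = 0"
    using \<gamma>deg by (intro contract_pre_mA_eq_0[OF low \<gamma>r q]) arith
  ultimately show ?thesis
    by (simp add: w contract_ps_add)
qed

lemma lincomb_mem_pre_mA:
  assumes B: "B \<subseteq> PS n"
    and low: "\<forall>x. Poly_Mapping.keys x \<subseteq> {..<n} \<longrightarrow> mdeg x \<le> u \<longrightarrow> (\<Sum>b\<in>B. c b * b x) = 0"
  shows "(\<lambda>x. \<Sum>b\<in>B. c b * b x) \<in> pre_mA n F (Suc u)"
proof -
  have PS: "(\<lambda>x. \<Sum>b\<in>B. c b * b x) \<in> PS n"
    unfolding PS_def
  proof (intro CollectI allI impI)
    fix x :: "nat \<Rightarrow>\<^sub>0 nat"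
    assume "\<not> Poly_Mapping.keys x \<subseteq> {..<n}"
    then have "\<forall>b\<in>B. b x = 0" using B unfolding PS_def by blast
    then show "(\<Sum>b\<in>B. c b * b x) = 0" by (simp add: sum.neutral)
  qed
  moreover have "(\<Sum>b\<in>B. c b * b x) = 0" if "mdeg x < Suc u" for x
    using low that PS unfolding PS_def by (cases "Poly_Mapping.keys x \<subseteq> {..<n}") auto
  ultimately have "(\<lambda>x. \<Sum>b\<in>B. c b * b x) \<in> mpow n (Suc u)"
    unfolding mpow_def by blast
  then show ?thesis
    using mpow_subset_pre_mA by blast
qed

lemma HA_ne_0_if_split_monomial:
  assumes low: "\<forall>b\<in>Poly_Mapping.keys F. dp_deg F - a < mdeg b \<longrightarrow> Poly_Mapping.keys b \<subseteq> {..<r}"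
    and F: "\<beta> + \<gamma> \<in> Poly_Mapping.keys F" and n: "Poly_Mapping.keys (\<beta> + \<gamma>) \<subseteq> {..<n}"
    and deg: "mdeg (\<beta> + \<gamma>) = dp_deg F - a"
    and \<beta>: "\<not> Poly_Mapping.keys \<beta> \<subseteq> {..<r}" and \<gamma>: "\<not> Poly_Mapping.keys \<gamma> \<subseteq> {..<r}"
  shows "HA n F a (mdeg \<beta>) \<noteq> 0"
proof -
  define u where "u = mdeg \<beta>"
  define U where "U = set_add (preC n F a u) (pre_mA n F (Suc u))"
  define W where "W = set_add (preC n F (Suc a) u) (pre_mA n F (Suc u))"
  have \<beta>n: "Poly_Mapping.keys \<beta> \<subseteq> {..<n}" and \<gamma>n: "Poly_Mapping.keys \<gamma> \<subseteq> {..<n}"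
    using n by (auto simp: keys_add_nat)
  have "ps_monom \<beta> \<in> U"
    using ps_monom_preC[OF low \<beta>n \<beta>] set_add_zero_right[OF zero_pre_mA]
    unfolding U_def u_def by blast
  moreover have "c = 0" if "(\<lambda>x. c * ps_monom \<beta> x) \<in> W" for c
  proof -
    have "mdeg \<gamma> = dp_deg F - a - u"
      using deg by (simp add: u_def mdeg_add)
    then have "contract (\<lambda>x. c * ps_monom \<beta> x) F \<gamma> = 0"
      using contract_eq_0_on_next_stratum[OF low \<gamma>n \<gamma>] that unfolding W_def by blast
    then have "c * Poly_Mapping.lookup F (\<beta> + \<gamma>) = 0"
      by (simp add: contract_scale contract_ps_monom)
    with F show "c = 0" by (simp add: in_keys_iff)
  qed
  moreover have "(\<lambda>x. \<Sum>b\<in>B. c b * b x) \<in> W"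
    if "B \<subseteq> U" and "\<forall>x\<in>{x. Poly_Mapping.keys x \<subseteq> {..<n} \<and> mdeg x \<le> u}. (\<Sum>b\<in>B. c b * b x) = 0"
    for B c
  proof -
    have "U \<subseteq> PS n"
      unfolding U_def preC_def by (rule set_add_PS) (use pre_mA_PS in blast)+
    with that have "(\<lambda>x. \<Sum>b\<in>B. c b * b x) \<in> pre_mA n F (Suc u)"
      by (intro lincomb_mem_pre_mA) auto
    then show ?thesis
      using set_add_zero_left[OF zero_preC] unfolding W_def by blast
  qed
  moreover have "finite {x. Poly_Mapping.keys x \<subseteq> {..<n} \<and> mdeg x \<le> u}"
    by (rule finite_mdeg_le) simp
  ultimately have "qdim U W \<noteq> 0"
    by (intro qdim_ne_0) auto
  then show ?thesis
    unfolding HA_def U_def W_def u_def .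
qed

text \<open>Only \<open>Hu\<close> and the range of \<open>u\<close> are used: the argument gives \<open>H_A(a)_u \<noteq> 0\<close> for
  every \<open>u \<in> [1, j - a - 1]\<close> as soon as \<open>f_(j-a)\<close> is not linear in the \<open>Z\<close>.\<close>

theorem lemma1p40:
  fixes F :: "(nat \<Rightarrow>\<^sub>0 nat) \<Rightarrow>\<^sub>0 'k::field"
    and r s j a u :: nat
  assumes inE: "\<forall>b\<in>Poly_Mapping.keys F. Poly_Mapping.keys b \<subseteq> {..<r + s}"
    and nz: "F \<noteq> 0"
    and deg: "dp_deg F = j"
    and inD: "\<forall>b\<in>Poly_Mapping.keys F. j - a < mdeg b \<longrightarrow> Poly_Mapping.keys b \<subseteq> {..<r}"
    and H1: "HA (r + s) F a 1 = HA (r + s) F a (j - a - 1)"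
    and H1nz: "HA (r + s) F a 1 \<noteq> 0"
    and u: "2 \<le> u" "u \<le> j - a - 2"
    and Hu: "HA (r + s) F a u = 0"
  shows "\<forall>b\<in>Poly_Mapping.keys F. mdeg b = j - a \<longrightarrow> (\<Sum>i\<in>{r..<r + s}. Poly_Mapping.lookup b i) \<le> 1"
proof (intro ballI impI, rule ccontr)
  fix b assume b: "b \<in> Poly_Mapping.keys F" and bdeg: "mdeg b = j - a"
    and "\<not> (\<Sum>i\<in>{r..<r + s}. Poly_Mapping.lookup b i) \<le> 1"
  then have "2 \<le> (\<Sum>i\<in>{r..<r + s}. Poly_Mapping.lookup b i)"
    by simp
  moreover have "1 \<le> u" "u < mdeg b"
    using u bdeg by linarith+
  ultimately obtain \<beta> \<gamma> where b_split: "b = \<beta> + \<gamma>" and \<beta>deg: "mdeg \<beta> = u"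
    and \<beta>Z: "Poly_Mapping.keys \<beta> \<inter> {r..<r + s} \<noteq> {}"
    and \<gamma>Z: "Poly_Mapping.keys \<gamma> \<inter> {r..<r + s} \<noteq> {}"
    using exists_split_both_meeting by blast
  have "HA (r + s) F a (mdeg \<beta>) \<noteq> 0"
  proof (rule HA_ne_0_if_split_monomial)
    show "\<forall>b\<in>Poly_Mapping.keys F. dp_deg F - a < mdeg b \<longrightarrow> Poly_Mapping.keys b \<subseteq> {..<r}"
      using inD deg by simp
    show "\<beta> + \<gamma> \<in> Poly_Mapping.keys F" "Poly_Mapping.keys (\<beta> + \<gamma>) \<subseteq> {..<r + s}"
      "mdeg (\<beta> + \<gamma>) = dp_deg F - a"
      using b inE bdeg deg by (auto simp: b_split)
    show "\<not> Poly_Mapping.keys \<beta> \<subseteq> {..<r}" "\<not> Poly_Mapping.keys \<gamma> \<subseteq> {..<r}"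
      using \<beta>Z \<gamma>Z by auto
  qed
  with \<beta>deg Hu show False
    by simp
qed

end
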